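(* Let $\mathcal P$ be an energy timed path, $E$ a closed interval with rational bounds, and $\mathcal R=\mathcal R^E_{\mathcal P}$ the associated energy function. For every decreasing sequence $(I_j)_{j\in\mathbb N}$ of intervals in $\mathcal I(E)$ (i.e. $I_j\supseteq I_{j+1}$ for all $j$), $$\mathcal R^{-1}\Big(\bigcap_{j\in\mathbb N} I_j\Big)=\bigcap_{j\in\mathbb N}\mathcal R^{-1}(I_j)\qquad\text{and}\qquad \mathcal R\Big(\bigcap_{j\in\mathbb N} I_j\Big)=\bigcap_{j\in\mathbb N}\mathcal R(I_j).$$
   Context: An energy timed automaton (ETA) is a tuple $\langle S,S_0,X,\mathrm{Inv},r,T\rangle$ where $S$ is a finite set of states, $S_0\subseteq S$ the initial states, $X$ a finite set of clocks, $\mathrm{Inv}$ assigns to each state an invariant which is a conjunction of closed (non-strict) clock constraints $x\bowtie c$ with $\bowtie\in\{\le,\ge,=\}$ and $c$ rational, $r\colon S\to\mathbb Q$ assigns an energy rate to each state, and $T$ is a finite set of transitions $(s,g,u,z,s')$ with $g$ a closed clock constraint (guard), $u\in\mathbb Q$ an energy update, and $z\subseteq X$ a set of clocks to reset. Given transitions $t_i=(s_i,g_i,u_i,z_i,s_{i+1})$, $0\le i<n$, a finite run is a sequence of configurations $(\ell_j,v_j,w_j)_{0\le j\le 2n}$ (state, clock valuation, energy level) for which there exist delays $d_i\ge 0$ with: $\ell_{2j}=\ell_{2j+1}=s_j$, $\ell_{2n}=s_n$; $v_{2j+1}=v_{2j}+d_j$ and $v_{2j+2}=v_{2j+1}[z_j\to0]$;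 $v_{2j}\models\mathrm{Inv}(s_j)$ and $v_{2j+1}\models \mathrm{Inv}(s_j)\wedge g_j$; $w_{2j+1}=w_{2j}+d_j\,r(s_j)$ and $w_{2j+2}=w_{2j+1}+u_j$. An energy constraint is a closed interval $E$ with rational bounds; a run satisfies $E$ if all its energy levels $w_j$ lie in $E$. $\mathcal I(E)$ denotes the set of closed subintervals of $E$ (including $\emptyset$). An energy timed path (ETP) from $s_0$ to $s_n$ is an ETA with states $s_0,\dots,s_n$, initial state $s_0$, and exactly one transition from $s_i$ to $s_{i+1}$ for each $0\le i<n$ (and no other transitions). The binary energy relation $\mathcal R^E_{\mathcal P}\subseteq E\times E$ of an ETP $\mathcal P$ holds for $(w_0,w_1)$ iff there is a finite run of $\mathcal P$ from $(s_0,\mathbf 0,w_0)$ to $(s_n,\mathbf 0,w_1)$ satisfying $E$ ($\mathbf 0$ the all-zero valuation). The associated energy function maps $I\in\mathcal I(E)$ to $\mathcal R(I)=\{w_1\in E\mid\exists w_0\in I.\ \mathcal R(w_0,w_1)\}$, and $\mathcal R^{-1}(I)=\{w_0\in E\mid \exists w_1\in I.\ \mathcal R(w_0,w_1)\}$. *)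

theory Defs
  imports Main "HOL.Real"
begin

datatype cmp = CLe | CGe | CEq

type_synonym 'c constr = "'c \<times> cmp \<times> rat"

type_synonym 'c valuation = "'c \<Rightarrow> real"

fun sat_atom :: "'c valuation \<Rightarrow> 'c constr \<Rightarrow> bool" where
  "sat_atom v (x, CLe, c) = (v x \<le> real_of_rat c)"
| "sat_atom v (x, CGe, c) = (v x \<ge> real_of_rat c)"
| "sat_atom v (x, CEq, c) = (v x = real_of_rat c)"

definition sat :: "'c valuation \<Rightarrow> 'c constr list \<Rightarrow> bool" where
  "sat v gs \<longleftrightarrow> (\<forall>a\<in>set gs. sat_atom v a)"

definition constr_clocks :: "'c constr list \<Rightarrow> 'c set" where
  "constr_clocks gs = fst ` set gs"

type_synonym ('s, 'c) tr = "'s \<times> 'c constr list \<times> rat \<times> 'c set \<times> 's"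

definition tr_src :: "('s, 'c) tr \<Rightarrow> 's" where "tr_src t = fst t"
definition tr_guard :: "('s, 'c) tr \<Rightarrow> 'c constr list" where "tr_guard t = fst (snd t)"
definition tr_upd :: "('s, 'c) tr \<Rightarrow> rat" where "tr_upd t = fst (snd (snd t))"
definition tr_reset :: "('s, 'c) tr \<Rightarrow> 'c set" where "tr_reset t = fst (snd (snd (snd t)))"
definition tr_tgt :: "('s, 'c) tr \<Rightarrow> 's" where "tr_tgt t = snd (snd (snd (snd t)))"

record ('s, 'c) eta =
  states :: "'s set"
  init :: "'s set"
  clocks :: "'c set"
  inv :: "'s \<Rightarrow> 'c constr list"
  rate :: "'s \<Rightarrow> rat"
  trans :: "('s, 'c) tr set"

definition wf_eta :: "('s, 'c) eta \<Rightarrow> bool" where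
  "wf_eta A \<longleftrightarrow> finite (states A) \<and> init A \<subseteq> states A \<and> finite (clocks A)
     \<and> (\<forall>s\<in>states A. constr_clocks (inv A s) \<subseteq> clocks A)
     \<and> finite (trans A)
     \<and> (\<forall>t\<in>trans A. tr_src t \<in> states A \<and> tr_tgt t \<in> states A
            \<and> constr_clocks (tr_guard t) \<subseteq> clocks A \<and> tr_reset t \<subseteq> clocks A)"

definition is_ETP :: "('s, 'c) eta \<Rightarrow> 's list \<Rightarrow> bool" where
  "is_ETP A ss \<longleftrightarrow> wf_eta A \<and> ss \<noteq> [] \<and> distinct ss
     \<and> states A = set ss \<and> init A = {hd ss}
     \<and> (\<forall>i. Suc i < length ss \<longrightarrow>
            (\<exists>!t. t \<in> trans A \<and> tr_src t = ss ! i \<and> tr_tgt t = ss ! Suc i))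
     \<and> (\<forall>t\<in>trans A. \<exists>i. Suc i < length ss \<and> tr_src t = ss ! i \<and> tr_tgt t = ss ! Suc i)"

type_synonym ('s, 'c) config = "'s \<times> 'c valuation \<times> real"

definition loc :: "('s, 'c) config \<Rightarrow> 's" where "loc c = fst c"
definition val :: "('s, 'c) config \<Rightarrow> 'c valuation" where "val c = fst (snd c)"
definition en :: "('s, 'c) config \<Rightarrow> real" where "en c = snd (snd c)"

definition is_run :: "('s, 'c) eta \<Rightarrow> ('s, 'c) tr list \<Rightarrow> ('s, 'c) config list \<Rightarrow> bool" where
  "is_run A ts cs \<longleftrightarrow> length cs = 2 * length ts + 1 \<and>
     (\<forall>j < length ts. ts ! j \<in> trans A \<and>
        (\<exists>d::real. d \<ge> 0 \<and>
           loc (cs ! (2*j)) = tr_src (ts ! j) \<and>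
           loc (cs ! (2*j+1)) = tr_src (ts ! j) \<and>
           loc (cs ! (2*j+2)) = tr_tgt (ts ! j) \<and>
           val (cs ! (2*j+1)) = (\<lambda>x. val (cs ! (2*j)) x + d) \<and>
           val (cs ! (2*j+2)) = (\<lambda>x. if x \<in> tr_reset (ts ! j) then 0 else val (cs ! (2*j+1)) x) \<and>
           sat (val (cs ! (2*j))) (inv A (tr_src (ts ! j))) \<and>
           sat (val (cs ! (2*j+1))) (inv A (tr_src (ts ! j))) \<and>
           sat (val (cs ! (2*j+1))) (tr_guard (ts ! j)) \<and>
           en (cs ! (2*j+1)) = en (cs ! (2*j)) + d * real_of_rat (rate A (tr_src (ts ! j))) \<and>
           en (cs ! (2*j+2)) = en (cs ! (2*j+1)) + real_of_rat (tr_upd (ts ! j))))"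

definition run_satisfies :: "('s, 'c) config list \<Rightarrow> real set \<Rightarrow> bool" where
  "run_satisfies cs E \<longleftrightarrow> (\<forall>c\<in>set cs. en c \<in> E)"

definition energy_rel :: "('s, 'c) eta \<Rightarrow> 's list \<Rightarrow> real set \<Rightarrow> real \<Rightarrow> real \<Rightarrow> bool" where
  "energy_rel A ss E w0 w1 \<longleftrightarrow> w0 \<in> E \<and> w1 \<in> E \<and>
     (\<exists>ts cs. is_run A ts cs \<and> run_satisfies cs E
        \<and> hd cs = (hd ss, (\<lambda>_. 0), w0) \<and> last cs = (last ss, (\<lambda>_. 0), w1))"

definition energy_img :: "('s, 'c) eta \<Rightarrow> 's list \<Rightarrow> real set \<Rightarrow> real set \<Rightarrow> real set" where
  "energy_img A ss E I = {w1 \<in> E. \<exists>w0\<in>I. energy_rel A ss E w0 w1}"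

definition energy_preimg :: "('s, 'c) eta \<Rightarrow> 's list \<Rightarrow> real set \<Rightarrow> real set \<Rightarrow> real set" where
  "energy_preimg A ss E I = {w0 \<in> E. \<exists>w1\<in>I. energy_rel A ss E w0 w1}"

text \<open>I(E): closed subintervals of E (including the empty set).\<close>
definition closed_subintervals :: "real set \<Rightarrow> real set set" where
  "closed_subintervals E = {I. I \<subseteq> E \<and> (\<exists>l u. I = {l..u})}"

end

theory Submission
  imports Defs "HOL-Analysis.Analysis"
begin

text \<open>A run of an energy timed path is determined by its initial energy and its delays. The
  energy relation is therefore the projection of the set of feasible (initial energy, delays)
  pairs, which is described by closed conditions. Delays spent in states of nonzero rate are
  bounded by the width of the energy interval; delays in states of rate zero can be capped
  just above the largest clock constant without changing anything. So the feasible set may be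
  taken compact, and its projection, the energy relation, is closed. The theorem is then the
  fact that for a closed relation the existence of a witness in every member of a decreasing
  sequence of compact intervals yields a witness in their intersection.\<close>

fun clock_val :: "('s, 'c) tr list \<Rightarrow> (nat \<Rightarrow> real) \<Rightarrow> nat \<Rightarrow> 'c valuation" where
  "clock_val ts d 0 = (\<lambda>_. 0)"
| "clock_val ts d (Suc j) = (\<lambda>x. if x \<in> tr_reset (ts ! j) then 0 else clock_val ts d j x + d j)"

definition step_rate :: "('s, 'c) eta \<Rightarrow> ('s, 'c) tr list \<Rightarrow> nat \<Rightarrow> real" where
  "step_rate A ts j = real_of_rat (rate A (tr_src (ts ! j)))"

definition step_upd :: "('s, 'c) tr list \<Rightarrow> nat \<Rightarrow> real" where
  "step_upd ts j = real_of_rat (tr_upd (ts ! j))"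

fun energy_val :: "('s, 'c) eta \<Rightarrow> ('s, 'c) tr list \<Rightarrow> real \<Rightarrow> (nat \<Rightarrow> real) \<Rightarrow> nat \<Rightarrow> real" where
  "energy_val A ts w0 d 0 = w0"
| "energy_val A ts w0 d (Suc j) = energy_val A ts w0 d j + d j * step_rate A ts j + step_upd ts j"

text \<open>The run along \<open>ts\<close> with initial energy \<open>w0\<close> and delays \<open>d\<close> has the configurations
  \<open>(s\<^sub>j, clock_val ts d j, energy_val A ts w0 d j)\<close> at the even positions \<open>2 j\<close>.\<close>

definition step_feasible ::
    "('s, 'c) eta \<Rightarrow> ('s, 'c) tr list \<Rightarrow> real set \<Rightarrow> real \<Rightarrow> (nat \<Rightarrow> real) \<Rightarrow> nat \<Rightarrow> bool" where
  "step_feasible A ts E w0 d j \<longleftrightarrow> 0 \<le> d j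
     \<and> sat (clock_val ts d j) (inv A (tr_src (ts ! j)))
     \<and> sat (\<lambda>x. clock_val ts d j x + d j) (inv A (tr_src (ts ! j)))
     \<and> sat (\<lambda>x. clock_val ts d j x + d j) (tr_guard (ts ! j))
     \<and> energy_val A ts w0 d j \<in> E
     \<and> energy_val A ts w0 d j + d j * step_rate A ts j \<in> E"

definition feasible_delays ::
    "('s, 'c) eta \<Rightarrow> ('s, 'c) tr list \<Rightarrow> real set \<Rightarrow> real \<Rightarrow> (nat \<Rightarrow> real) \<Rightarrow> bool" where
  "feasible_delays A ts E w0 d \<longleftrightarrow> (\<forall>j < length ts. step_feasible A ts E w0 d j)
     \<and> energy_val A ts w0 d (length ts) \<in> E \<and> clock_val ts d (length ts) = (\<lambda>_. 0)"

definition follows_path :: "('s, 'c) eta \<Rightarrow> 's list \<Rightarrow> ('s, 'c) tr list \<Rightarrow> bool" where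
  "follows_path A ss ts \<longleftrightarrow> length ss = Suc (length ts) \<and>
     (\<forall>j < length ts. ts ! j \<in> trans A \<and> tr_src (ts ! j) = ss ! j \<and> tr_tgt (ts ! j) = ss ! Suc j)"

lemma run_imp_feasible_delays:
  assumes run: "is_run A ts cs" and rs: "run_satisfies cs E"
    and hd: "hd cs = (s0, (\<lambda>_. 0), w0)" and last: "last cs = (s1, (\<lambda>_. 0), w1)"
  obtains d where "feasible_delays A ts E w0 d" "energy_val A ts w0 d (length ts) = w1"
proof -
  let ?m = "length ts"
  \<comment> \<open>All clocks advance by the delay, so it can be read off any clock.\<close>
  define d where "d j = val (cs ! (2*j+1)) undefined - val (cs ! (2*j)) undefined" for j
  have len: "length cs = 2 * ?m + 1" using run unfolding is_run_def by simp
  have step: "0 \<le> d j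
      \<and> val (cs ! (2*j+1)) = (\<lambda>x. val (cs ! (2*j)) x + d j)
      \<and> val (cs ! (2*j+2)) = (\<lambda>x. if x \<in> tr_reset (ts ! j) then 0 else val (cs ! (2*j+1)) x)
      \<and> sat (val (cs ! (2*j))) (inv A (tr_src (ts ! j)))
      \<and> sat (val (cs ! (2*j+1))) (inv A (tr_src (ts ! j)))
      \<and> sat (val (cs ! (2*j+1))) (tr_guard (ts ! j))
      \<and> en (cs ! (2*j+1)) = en (cs ! (2*j)) + d j * step_rate A ts j
      \<and> en (cs ! (2*j+2)) = en (cs ! (2*j+1)) + step_upd ts j" if "j < ?m" for j
    using run that unfolding is_run_def d_def step_rate_def step_upd_def by auto
  have first: "cs ! 0 = hd cs" using len by (cases cs) auto
  have final: "cs ! (2 * ?m) = last cs" using len last_conv_nth[of cs] by (cases cs) auto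
  have even_conf: "val (cs ! (2*j)) = clock_val ts d j \<and> en (cs ! (2*j)) = energy_val A ts w0 d j"
    if "j \<le> ?m" for j
    using that
  proof (induction j)
    case 0
    then show ?case using first hd by (simp add: val_def en_def)
  next
    case (Suc j)
    then show ?case using step[of j] by auto
  qed
  have in_E: "p \<le> 2 * ?m \<Longrightarrow> en (cs ! p) \<in> E" for p
    using rs len unfolding run_satisfies_def by auto
  have "step_feasible A ts E w0 d j" if "j < ?m" for j
    using step[OF that] even_conf[of j] in_E[of "2*j"] in_E[of "2*j+1"] that
    unfolding step_feasible_def by auto
  moreover have "energy_val A ts w0 d ?m = w1" "clock_val ts d ?m = (\<lambda>_. 0)"
    using even_conf[of ?m] final last by (simp_all add: val_def en_def)
  moreover have "w1 \<in> E" using in_E[of "2 * ?m"] final last by (simp add: en_def)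
  ultimately show thesis using that unfolding feasible_delays_def by auto
qed

lemma feasible_delays_imp_energy_rel:
  assumes feasible: "feasible_delays A ts E w0 d" and path: "follows_path A ss ts"
  shows "energy_rel A ss E w0 (energy_val A ts w0 d (length ts))"
proof -
  let ?m = "length ts"
  define conf where "conf p = (ss ! (p div 2),
      (if even p then clock_val ts d (p div 2) else (\<lambda>x. clock_val ts d (p div 2) x + d (p div 2))),
      (if even p then energy_val A ts w0 d (p div 2)
       else energy_val A ts w0 d (p div 2) + d (p div 2) * step_rate A ts (p div 2)))" for p
  define cs where "cs = map conf [0..<2 * ?m + 1]"
  have len: "length cs = 2 * ?m + 1" by (simp add: cs_def)
  have nth: "p < 2 * ?m + 1 \<Longrightarrow> cs ! p = conf p" for p by (simp add: cs_def del: upt_Suc)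
  have steps: "\<forall>j < ?m. step_feasible A ts E w0 d j"
    and final_E: "energy_val A ts w0 d ?m \<in> E" and final_zero: "clock_val ts d ?m = (\<lambda>_. 0)"
    using feasible unfolding feasible_delays_def by auto
  have ss_len: "length ss = Suc ?m" using path unfolding follows_path_def by simp
  have "is_run A ts cs"
    unfolding is_run_def
  proof (intro conjI allI impI len, goal_cases)
    case (1 j)
    then show ?case using path unfolding follows_path_def by simp
  next
    case (2 j)
    have "cs ! (2*j) = (ss ! j, clock_val ts d j, energy_val A ts w0 d j)"
      "cs ! (2*j+1) = (ss ! j, (\<lambda>x. clock_val ts d j x + d j),
                        energy_val A ts w0 d j + d j * step_rate A ts j)"
      "cs ! (2*j+2) = (ss ! Suc j, clock_val ts d (Suc j), energy_val A ts w0 d (Suc j))"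
      using 2 nth[of "2*j"] nth[of "2*j+1"] nth[of "2*j+2"]
      by (simp_all add: conf_def del: clock_val.simps energy_val.simps)
    then show ?case
      using steps 2 path unfolding follows_path_def step_feasible_def
      by (intro exI[of _ "d j"]) (auto simp: loc_def val_def en_def step_rate_def step_upd_def)
  qed
  moreover have "run_satisfies cs E"
    unfolding run_satisfies_def
  proof
    fix c assume "c \<in> set cs"
    then obtain p where p: "p < 2 * ?m + 1" "c = conf p" unfolding cs_def by (auto simp del: upt_Suc)
    show "en c \<in> E"
    proof (cases "even p")
      case True
      then have "p div 2 < ?m \<or> p div 2 = ?m" using p by auto
      then show ?thesis using True p steps final_E by (auto simp: conf_def en_def step_feasible_def)
    next
      case False
      then have "p div 2 < ?m" using p by presburger
      then show ?thesis using False p steps by (simp add: conf_def en_def step_feasible_def)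
    qed
  qed
  moreover have "hd cs = (hd ss, (\<lambda>_. 0), w0)"
    using nth[of 0] len ss_len by (cases cs; cases ss) (auto simp: conf_def)
  moreover have "last cs = (last ss, (\<lambda>_. 0), energy_val A ts w0 d ?m)"
  proof -
    have "cs \<noteq> []" using len by auto
    then have "last cs = conf (2 * ?m)" using nth[of "2 * ?m"] len by (simp add: last_conv_nth)
    moreover have "ss \<noteq> []" using ss_len by auto
    then have "ss ! ?m = last ss" using ss_len by (simp add: last_conv_nth)
    ultimately show ?thesis using final_zero by (simp add: conf_def)
  qed
  moreover have "w0 \<in> E"
    using steps final_E by (cases "?m = 0") (auto simp: step_feasible_def)
  ultimately show ?thesis unfolding energy_rel_def using final_E by blast
qed

lemma run_follows_path:
  assumes etp: "is_ETP A ss" and run: "is_run A ts cs"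
    and hd: "loc (hd cs) = hd ss" and last: "loc (last cs) = last ss"
  shows "follows_path A ss ts"
proof -
  let ?m = "length ts"
  have trans_on_path: "\<forall>t\<in>trans A. \<exists>i. Suc i < length ss \<and> tr_src t = ss ! i \<and> tr_tgt t = ss ! Suc i"
    and dist: "distinct ss" and ne: "ss \<noteq> []" using etp unfolding is_ETP_def by auto
  have len: "length cs = 2 * ?m + 1" using run unfolding is_run_def by simp
  have step: "loc (cs ! (2*j)) = tr_src (ts ! j) \<and> loc (cs ! (2*j+2)) = tr_tgt (ts ! j)
      \<and> ts ! j \<in> trans A" if "j < ?m" for j
    using run that unfolding is_run_def by blast
  \<comment> \<open>Since the states of the path are distinct, a transition leaving \<open>s\<^sub>j\<close> must enter \<open>s\<^sub>j\<^sub>+\<^sub>1\<close>.\<close>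
  have next_state: "tr_tgt (ts ! j) = ss ! Suc j \<and> Suc j < length ss"
    if j: "j < ?m" "tr_src (ts ! j) = ss ! j" "j < length ss" for j
  proof -
    obtain i where i: "Suc i < length ss" "tr_src (ts ! j) = ss ! i" "tr_tgt (ts ! j) = ss ! Suc i"
      using trans_on_path step[OF j(1)] by blast
    have "i = j" using i j dist nth_eq_iff_index_eq by (metis Suc_lessD)
    then show ?thesis using i by simp
  qed
  have first: "cs ! 0 = hd cs" using len by (cases cs) auto
  have final: "cs ! (2 * ?m) = last cs" using len last_conv_nth[of cs] by (cases cs) auto
  have along: "tr_src (ts ! j) = ss ! j \<and> tr_tgt (ts ! j) = ss ! Suc j \<and> Suc j < length ss"
    if "j < ?m" for j
    using that
  proof (induction j)
    case 0
    then have "tr_src (ts ! 0) = ss ! 0" using step[of 0] first hd ne by (simp add: hd_conv_nth)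
    then show ?case using next_state[OF 0] ne by simp
  next
    case (Suc j)
    then have "tr_src (ts ! Suc j) = ss ! Suc j" using step[of j] step[of "Suc j"] by simp
    then show ?case using next_state[OF Suc.prems] Suc by simp
  qed
  have "ss ! ?m = last ss \<and> ?m < length ss"
  proof (cases ?m)
    case 0
    then show ?thesis using hd last first final ne by (simp add: hd_conv_nth)
  next
    case (Suc k)
    then have "2 * k + 2 = 2 * ?m" by simp
    then show ?thesis using Suc along[of k] step[of k] last final by simp
  qed
  then have "ss ! ?m = ss ! (length ss - 1)" "?m < length ss" using ne by (simp_all add: last_conv_nth)
  then have "length ss = Suc ?m" using nth_eq_iff_index_eq[OF dist, of ?m "length ss - 1"] ne by simp
  then show ?thesis unfolding follows_path_def using along step by auto
qed

lemma follows_path_unique: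
  assumes etp: "is_ETP A ss" and "follows_path A ss ts" "follows_path A ss ts'"
  shows "ts = ts'"
proof (rule nth_equalityI)
  show "length ts = length ts'" using assms unfolding follows_path_def by simp
  fix j assume j: "j < length ts"
  then have "\<exists>!t. t \<in> trans A \<and> tr_src t = ss ! j \<and> tr_tgt t = ss ! Suc j"
    using etp assms(2) unfolding is_ETP_def follows_path_def by simp
  moreover have "ts ! j \<in> trans A \<and> tr_src (ts ! j) = ss ! j \<and> tr_tgt (ts ! j) = ss ! Suc j"
    "ts' ! j \<in> trans A \<and> tr_src (ts' ! j) = ss ! j \<and> tr_tgt (ts' ! j) = ss ! Suc j"
    using j assms(2,3) unfolding follows_path_def by auto
  ultimately show "ts ! j = ts' ! j" unfolding Ex1_def by blast
qed

lemma ETP_follows_path: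
  assumes etp: "is_ETP A ss"
  obtains ts where "follows_path A ss ts"
proof -
  have "\<forall>i. Suc i < length ss \<longrightarrow> (\<exists>!t. t \<in> trans A \<and> tr_src t = ss ! i \<and> tr_tgt t = ss ! Suc i)"
    and ne: "ss \<noteq> []"
    using etp unfolding is_ETP_def by simp_all
  then have "\<forall>i. \<exists>t. Suc i < length ss \<longrightarrow> t \<in> trans A \<and> tr_src t = ss ! i \<and> tr_tgt t = ss ! Suc i"
    by blast
  from choice[OF this] obtain f
    where f: "\<forall>i. Suc i < length ss \<longrightarrow> f i \<in> trans A \<and> tr_src (f i) = ss ! i \<and> tr_tgt (f i) = ss ! Suc i"
    by blast
  have "follows_path A ss (map f [0..<length ss - 1])"
    using f ne unfolding follows_path_def by auto
  then show thesis by (rule that)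
qed

lemma energy_rel_iff_feasible_delays:
  assumes etp: "is_ETP A ss" and path: "follows_path A ss ts"
  shows "energy_rel A ss E w0 w1
    \<longleftrightarrow> (\<exists>d. feasible_delays A ts E w0 d \<and> energy_val A ts w0 d (length ts) = w1)"
proof
  assume "energy_rel A ss E w0 w1"
  then obtain ts' cs where run: "is_run A ts' cs" "run_satisfies cs E"
    "hd cs = (hd ss, (\<lambda>_. 0), w0)" "last cs = (last ss, (\<lambda>_. 0), w1)"
    unfolding energy_rel_def by blast
  then have "follows_path A ss ts'" using run_follows_path[OF etp] by (simp add: loc_def)
  then have "ts' = ts" using follows_path_unique[OF etp _ path] by simp
  then show "\<exists>d. feasible_delays A ts E w0 d \<and> energy_val A ts w0 d (length ts) = w1"
    using run_imp_feasible_delays[OF run] by metis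
next
  assume "\<exists>d. feasible_delays A ts E w0 d \<and> energy_val A ts w0 d (length ts) = w1"
  then show "energy_rel A ss E w0 w1" using feasible_delays_imp_energy_rel[OF _ path] by blast
qed

definition path_constrs :: "('s, 'c) eta \<Rightarrow> ('s, 'c) tr list \<Rightarrow> 'c constr set" where
  "path_constrs A ts = (\<Union>j<length ts. set (inv A (tr_src (ts ! j))) \<union> set (tr_guard (ts ! j)))"

definition max_const :: "('s, 'c) eta \<Rightarrow> ('s, 'c) tr list \<Rightarrow> real" where
  "max_const A ts = Max (insert 0 ((\<lambda>(_, _, c). \<bar>real_of_rat c\<bar>) ` path_constrs A ts))"

lemma finite_path_constrs: "finite (path_constrs A ts)"
  unfolding path_constrs_def by auto

lemma max_const_ge: "(x, k, c) \<in> path_constrs A ts \<Longrightarrow> \<bar>real_of_rat c\<bar> \<le> max_const A ts"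
  unfolding max_const_def using finite_path_constrs by (intro Max_ge) force+

lemma max_const_nonneg: "0 \<le> max_const A ts"
  unfolding max_const_def using finite_path_constrs by (intro Max_ge) auto

definition region_eq :: "real \<Rightarrow> real \<Rightarrow> real \<Rightarrow> bool" where
  "region_eq M u u' \<longleftrightarrow> u = u' \<or> (M < u \<and> M < u')"

lemma sat_region_eq:
  assumes "\<And>x k c. (x, k, c) \<in> set gs \<Longrightarrow> \<bar>real_of_rat c\<bar> \<le> M"
    and "\<And>x. region_eq M (v x) (v' x)"
  shows "sat v gs \<longleftrightarrow> sat v' gs"
proof -
  have "sat_atom v (x, k, c) \<longleftrightarrow> sat_atom v' (x, k, c)" if "(x, k, c) \<in> set gs" for x k c
  proof -
    have "real_of_rat c \<le> M" "- M \<le> real_of_rat c" using assms(1)[OF that] by linarith+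
    then show ?thesis using assms(2)[of x] unfolding region_eq_def by (cases k) auto
  qed
  then show ?thesis unfolding sat_def by auto
qed

lemma region_eq_add:
  assumes "region_eq M u u'" "region_eq M e e'" "0 \<le> u" "0 \<le> u'" "0 \<le> e"
  shows "region_eq M (u + e) (u' + e')"
  using assms unfolding region_eq_def by auto

text \<open>Waiting longer than \<open>M + 1\<close> in a state of rate zero changes neither the energy nor,
  if \<open>M\<close> bounds all constants, the truth of any constraint.\<close>

definition cap_delays :: "('s, 'c) eta \<Rightarrow> ('s, 'c) tr list \<Rightarrow> real \<Rightarrow> (nat \<Rightarrow> real) \<Rightarrow> nat \<Rightarrow> real" where
  "cap_delays A ts M d j = (if step_rate A ts j = 0 then min (d j) (M + 1) else d j)"

lemma energy_val_cap_delays: "energy_val A ts w0 (cap_delays A ts M d) j = energy_val A ts w0 d j"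
  by (induction j) (auto simp: cap_delays_def)

lemma region_eq_cap_delays: "region_eq M (d j) (cap_delays A ts M d j)"
  unfolding region_eq_def cap_delays_def by auto

lemma clock_val_nonneg: "(\<And>i. i < j \<Longrightarrow> 0 \<le> d i) \<Longrightarrow> 0 \<le> clock_val ts d j x"
  by (induction j) auto

lemma region_eq_clock_val_cap_delays:
  assumes "\<And>i. i < j \<Longrightarrow> 0 \<le> d i" and "0 \<le> M"
  shows "region_eq M (clock_val ts d j x) (clock_val ts (cap_delays A ts M d) j x)"
  using assms(1)
proof (induction j)
  case 0
  then show ?case by (simp add: region_eq_def)
next
  case (Suc j)
  have "0 \<le> cap_delays A ts M d i" if "i < j" for i
    using Suc.prems that \<open>0 \<le> M\<close> by (simp add: cap_delays_def)
  then have "region_eq M (clock_val ts d j x + d j) (clock_val ts (cap_delays A ts M d) j x + cap_delays A ts M d j)"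
    using Suc by (intro region_eq_add region_eq_cap_delays clock_val_nonneg) auto
  then show ?case by (simp add: region_eq_def)
qed

lemma feasible_cap_delays:
  assumes feasible: "feasible_delays A ts E w0 d"
  shows "feasible_delays A ts E w0 (cap_delays A ts (max_const A ts) d)"
proof -
  let ?m = "length ts" and ?M = "max_const A ts"
  let ?d = "cap_delays A ts ?M d"
  have steps: "\<forall>j < ?m. step_feasible A ts E w0 d j"
    and final_E: "energy_val A ts w0 d ?m \<in> E" and final_zero: "clock_val ts d ?m = (\<lambda>_. 0)"
    using feasible unfolding feasible_delays_def by auto
  have M: "0 \<le> ?M" by (rule max_const_nonneg)
  have d_nonneg: "i < ?m \<Longrightarrow> 0 \<le> d i" for i using steps by (simp add: step_feasible_def)
  have cap_nonneg: "i < ?m \<Longrightarrow> 0 \<le> ?d i" for i using d_nonneg M by (simp add: cap_delays_def)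
  have region_eq_val: "region_eq ?M (clock_val ts d j x) (clock_val ts ?d j x)" if "j \<le> ?m" for j x
    using that d_nonneg M by (intro region_eq_clock_val_cap_delays) auto
  have "step_feasible A ts E w0 ?d j" if j: "j < ?m" for j
  proof -
    let ?inv = "inv A (tr_src (ts ! j))" and ?guard = "tr_guard (ts ! j)"
    have bound_inv: "\<bar>real_of_rat c\<bar> \<le> ?M" if "(x, k, c) \<in> set ?inv" for x k c
      using that j by (intro max_const_ge) (auto simp: path_constrs_def)
    have bound_guard: "\<bar>real_of_rat c\<bar> \<le> ?M" if "(x, k, c) \<in> set ?guard" for x k c
      using that j by (intro max_const_ge) (auto simp: path_constrs_def)
    have uncapped: "sat (clock_val ts d j) ?inv" "sat (\<lambda>x. clock_val ts d j x + d j) ?inv"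
      "sat (\<lambda>x. clock_val ts d j x + d j) ?guard"
      "energy_val A ts w0 d j \<in> E" "energy_val A ts w0 d j + d j * step_rate A ts j \<in> E"
      using steps j unfolding step_feasible_def by auto
    have delayed: "region_eq ?M (clock_val ts d j x + d j) (clock_val ts ?d j x + ?d j)" for x
      using j d_nonneg cap_nonneg region_eq_val[of j x]
      by (intro region_eq_add region_eq_cap_delays clock_val_nonneg) auto
    have "sat (clock_val ts d j) ?inv \<longleftrightarrow> sat (clock_val ts ?d j) ?inv"
      by (rule sat_region_eq) (use bound_inv region_eq_val j in auto)
    moreover have "sat (\<lambda>x. clock_val ts d j x + d j) ?inv
        \<longleftrightarrow> sat (\<lambda>x. clock_val ts ?d j x + ?d j) ?inv"
      by (rule sat_region_eq) (use bound_inv delayed in auto)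
    moreover have "sat (\<lambda>x. clock_val ts d j x + d j) ?guard
        \<longleftrightarrow> sat (\<lambda>x. clock_val ts ?d j x + ?d j) ?guard"
      by (rule sat_region_eq) (use bound_guard delayed in auto)
    moreover have rate_eq: "?d j * step_rate A ts j = d j * step_rate A ts j"
      by (simp add: cap_delays_def)
    ultimately show ?thesis
      using uncapped cap_nonneg[OF j] unfolding step_feasible_def energy_val_cap_delays rate_eq by simp
  qed
  moreover have "clock_val ts ?d ?m x = 0" for x
    using region_eq_val[of ?m x] final_zero M by (auto simp: region_eq_def)
  ultimately show ?thesis
    using final_E unfolding feasible_delays_def energy_val_cap_delays by auto
qed

lemma cap_delays_bound:
  assumes feasible: "feasible_delays A ts {lo..hi} w0 d" and j: "j < length ts" and "0 \<le> M"
  shows "\<bar>cap_delays A ts M d j\<bar> \<le> M + 1 + \<bar>hi - lo\<bar> / \<bar>step_rate A ts j\<bar>"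
proof -
  let ?r = "step_rate A ts j" and ?w = "energy_val A ts w0 d j"
  have step: "0 \<le> d j" "?w \<in> {lo..hi}" "?w + d j * ?r \<in> {lo..hi}"
    using feasible j unfolding feasible_delays_def step_feasible_def by auto
  show ?thesis
  proof (cases "?r = 0")
    case True
    then show ?thesis using step \<open>0 \<le> M\<close> by (simp add: cap_delays_def)
  next
    case False
    have "d j * \<bar>?r\<bar> \<le> \<bar>hi - lo\<bar>" using step by (simp add: abs_mult) linarith
    then have "d j \<le> \<bar>hi - lo\<bar> / \<bar>?r\<bar>" using False by (simp add: le_divide_eq)
    then show ?thesis using False step \<open>0 \<le> M\<close> by (simp add: cap_delays_def)
  qed
qed

lemma convergent_subsequence_componentwise:
  fixes D :: "nat \<Rightarrow> nat \<Rightarrow> 'a::heine_borel"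
  assumes "\<And>j. j < m \<Longrightarrow> bounded (range (\<lambda>k. D k j))"
  obtains r l where "strict_mono r" "\<And>j. j < m \<Longrightarrow> (\<lambda>k. D (r k) j) \<longlonglongrightarrow> l j"
proof -
  have "\<exists>r l. strict_mono r \<and> (\<forall>j < m. (\<lambda>k. D (r k) j) \<longlonglongrightarrow> l j)"
    using assms
  proof (induction m)
    case 0
    show ?case by (rule exI[of _ id]) (simp add: strict_mono_def)
  next
    case (Suc m)
    then obtain r l where r: "strict_mono r" "\<forall>j < m. (\<lambda>k. D (r k) j) \<longlonglongrightarrow> l j" by auto
    have "bounded (range (\<lambda>k. D (r k) m))"
      using Suc.prems[of m] by (rule bounded_subset) auto
    then obtain r' lm where r': "strict_mono r'" "((\<lambda>k. D (r k) m) \<circ> r') \<longlonglongrightarrow> lm"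
      using bounded_imp_convergent_subsequence by blast
    have "(\<lambda>k. D ((r \<circ> r') k) j) \<longlonglongrightarrow> (l(m := lm)) j" if "j < Suc m" for j
    proof (cases "j = m")
      case True
      then show ?thesis using r' by (simp add: o_def)
    next
      case False
      then have "(\<lambda>k. D (r k) j) \<longlonglongrightarrow> l j" using r(2) that by simp
      from LIMSEQ_subseq_LIMSEQ[OF this r'(1)] show ?thesis using False by (simp add: o_def)
    qed
    then show ?case using strict_mono_o[OF r(1) r'(1)] by blast
  qed
  then show thesis using that by blast
qed

lemma sat_limit:
  assumes "\<And>k. sat (v k) gs" and "\<And>x. (\<lambda>k. v k x) \<longlonglongrightarrow> u x"
  shows "sat u gs"
  unfolding sat_def
proof
  fix a assume "a \<in> set gs"
  obtain x k c where a: "a = (x, k, c)" by (cases a)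
  have all: "\<And>n. sat_atom (v n) (x, k, c)" using assms(1) \<open>a \<in> set gs\<close> a unfolding sat_def by auto
  have lim: "(\<lambda>n. v n x) \<longlonglongrightarrow> u x" by (rule assms(2))
  show "sat_atom u a" unfolding a
  proof (cases k)
    case CLe
    then show "sat_atom u (x, k, c)" using all by (auto intro!: LIMSEQ_le_const2[OF lim])
  next
    case CGe
    then show "sat_atom u (x, k, c)" using all by (auto intro!: LIMSEQ_le_const[OF lim])
  next
    case CEq
    then have "(\<lambda>n. real_of_rat c) \<longlonglongrightarrow> u x" using all lim by simp
    then show "sat_atom u (x, k, c)" using CEq LIMSEQ_unique[OF _ tendsto_const] by auto
  qed
qed

lemma tendsto_clock_val:
  assumes "\<And>i. i < j \<Longrightarrow> (\<lambda>k. D k i) \<longlonglongrightarrow> d i"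
  shows "(\<lambda>k. clock_val ts (D k) j x) \<longlonglongrightarrow> clock_val ts d j x"
  using assms by (induction j) (auto intro!: tendsto_add)

lemma tendsto_energy_val:
  assumes "\<And>i. i < j \<Longrightarrow> (\<lambda>k. D k i) \<longlonglongrightarrow> d i" and "w \<longlonglongrightarrow> w0"
  shows "(\<lambda>k. energy_val A ts (w k) (D k) j) \<longlonglongrightarrow> energy_val A ts w0 d j"
  using assms
proof (induction j)
  case (Suc j)
  then have "(\<lambda>k. energy_val A ts (w k) (D k) j) \<longlonglongrightarrow> energy_val A ts w0 d j"
    and "(\<lambda>k. D k j) \<longlonglongrightarrow> d j" by auto
  then show ?case by (simp add: tendsto_add tendsto_mult_right)
qed simp

lemma feasible_delays_limit:
  assumes E: "closed E" and feasible: "\<And>k. feasible_delays A ts E (w k) (D k)"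
    and D: "\<And>j. j < length ts \<Longrightarrow> (\<lambda>k. D k j) \<longlonglongrightarrow> d j" and w: "w \<longlonglongrightarrow> w0"
  shows "feasible_delays A ts E w0 d"
proof -
  let ?m = "length ts"
  have steps: "\<And>k. \<forall>j < ?m. step_feasible A ts E (w k) (D k) j"
    and final_E: "\<And>k. energy_val A ts (w k) (D k) ?m \<in> E"
    and final_zero: "\<And>k. clock_val ts (D k) ?m = (\<lambda>_. 0)"
    using feasible unfolding feasible_delays_def by auto
  have clock_lim: "(\<lambda>k. clock_val ts (D k) j x) \<longlonglongrightarrow> clock_val ts d j x" if "j \<le> ?m" for j x
    using that D by (intro tendsto_clock_val) auto
  have energy_lim: "(\<lambda>k. energy_val A ts (w k) (D k) j) \<longlonglongrightarrow> energy_val A ts w0 d j"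
    if "j \<le> ?m" for j
    using that D w by (intro tendsto_energy_val) auto
  have "step_feasible A ts E w0 d j" if j: "j < ?m" for j
  proof -
    have seq: "\<And>k. 0 \<le> D k j"
      "\<And>k. sat (clock_val ts (D k) j) (inv A (tr_src (ts ! j)))"
      "\<And>k. sat (\<lambda>x. clock_val ts (D k) j x + D k j) (inv A (tr_src (ts ! j)))"
      "\<And>k. sat (\<lambda>x. clock_val ts (D k) j x + D k j) (tr_guard (ts ! j))"
      "\<And>k. energy_val A ts (w k) (D k) j \<in> E"
      "\<And>k. energy_val A ts (w k) (D k) j + D k j * step_rate A ts j \<in> E"
      using steps j unfolding step_feasible_def by auto
    have clock_lim_j: "(\<lambda>k. clock_val ts (D k) j x) \<longlonglongrightarrow> clock_val ts d j x" for x
      using clock_lim j by simp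
    have energy_lim_j: "(\<lambda>k. energy_val A ts (w k) (D k) j) \<longlonglongrightarrow> energy_val A ts w0 d j"
      using energy_lim j by simp
    have delayed_lim: "(\<lambda>k. clock_val ts (D k) j x + D k j) \<longlonglongrightarrow> clock_val ts d j x + d j" for x
      using clock_lim_j D[OF j] by (rule tendsto_add)
    have "0 \<le> d j" using D[OF j] by (rule LIMSEQ_le_const) (use seq(1) in simp)
    moreover have "sat (clock_val ts d j) (inv A (tr_src (ts ! j)))"
      using seq(2) clock_lim_j by (rule sat_limit)
    moreover have "sat (\<lambda>x. clock_val ts d j x + d j) (inv A (tr_src (ts ! j)))"
      using seq(3) delayed_lim by (rule sat_limit)
    moreover have "sat (\<lambda>x. clock_val ts d j x + d j) (tr_guard (ts ! j))"
      using seq(4) delayed_lim by (rule sat_limit)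
    moreover have "energy_val A ts w0 d j \<in> E"
      using E seq(5) energy_lim_j by (rule closed_sequentially)
    moreover have "energy_val A ts w0 d j + d j * step_rate A ts j \<in> E"
      using E seq(6)
    proof (rule closed_sequentially)
      show "(\<lambda>k. energy_val A ts (w k) (D k) j + D k j * step_rate A ts j)
          \<longlonglongrightarrow> energy_val A ts w0 d j + d j * step_rate A ts j"
        using energy_lim_j D[OF j] by (intro tendsto_add tendsto_mult_right)
    qed
    ultimately show ?thesis unfolding step_feasible_def by simp
  qed
  moreover have "energy_val A ts w0 d ?m \<in> E"
    using E final_E energy_lim[OF order_refl] by (rule closed_sequentially)
  moreover have "clock_val ts d ?m x = 0" for x
  proof -
    have "(\<lambda>k. 0) \<longlonglongrightarrow> clock_val ts d ?m x" using clock_lim[of ?m x] final_zero by simp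
    then show ?thesis using LIMSEQ_unique tendsto_const by blast
  qed
  ultimately show ?thesis unfolding feasible_delays_def by auto
qed

theorem closed_energy_rel:
  assumes etp: "is_ETP A ss"
  shows "closed {(w0, w1). energy_rel A ss {lo..hi} w0 w1}"
  unfolding closed_sequential_limits
proof (intro allI impI, elim conjE)
  fix p :: "nat \<Rightarrow> real \<times> real" and l
  assume rel: "\<forall>n. p n \<in> {(w0, w1). energy_rel A ss {lo..hi} w0 w1}" and lim: "p \<longlonglongrightarrow> l"
  obtain ts where path: "follows_path A ss ts" using ETP_follows_path[OF etp] .
  let ?m = "length ts" and ?M = "max_const A ts"
  have "\<forall>k. \<exists>d. feasible_delays A ts {lo..hi} (fst (p k)) d
      \<and> energy_val A ts (fst (p k)) d ?m = snd (p k)"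
    using rel energy_rel_iff_feasible_delays[OF etp path] by (auto simp: case_prod_beta)
  then obtain D where D: "\<And>k. feasible_delays A ts {lo..hi} (fst (p k)) (D k)"
    "\<And>k. energy_val A ts (fst (p k)) (D k) ?m = snd (p k)"
    by metis
  define D' where "D' k = cap_delays A ts ?M (D k)" for k
  have feasible': "feasible_delays A ts {lo..hi} (fst (p k)) (D' k)" for k
    unfolding D'_def using D(1) by (rule feasible_cap_delays)
  have bounded: "bounded (range (\<lambda>k. D' k j))" if "j < ?m" for j
    unfolding bounded_real
    using cap_delays_bound[OF D(1) that max_const_nonneg[of A ts]] unfolding D'_def by blast
  obtain r d where r: "strict_mono r" "\<And>j. j < ?m \<Longrightarrow> (\<lambda>k. D' (r k) j) \<longlonglongrightarrow> d j"
    using convergent_subsequence_componentwise[of ?m D', OF bounded] by blast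
  have lim_r: "(\<lambda>k. p (r k)) \<longlonglongrightarrow> l" using LIMSEQ_subseq_LIMSEQ[OF lim r(1)] by (simp add: o_def)
  have fst_lim: "(\<lambda>k. fst (p (r k))) \<longlonglongrightarrow> fst l" and snd_lim: "(\<lambda>k. snd (p (r k))) \<longlonglongrightarrow> snd l"
    using tendsto_fst[OF lim_r] tendsto_snd[OF lim_r] by auto
  have "feasible_delays A ts {lo..hi} (fst l) d"
    using closed_atLeastAtMost feasible' r(2) fst_lim by (rule feasible_delays_limit)
  moreover have "energy_val A ts (fst l) d ?m = snd l"
  proof (rule LIMSEQ_unique)
    have "(\<lambda>k. energy_val A ts (fst (p (r k))) (D' (r k)) ?m) \<longlonglongrightarrow> energy_val A ts (fst l) d ?m"
      using r(2) fst_lim by (rule tendsto_energy_val)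
    then show "(\<lambda>k. snd (p (r k))) \<longlonglongrightarrow> energy_val A ts (fst l) d ?m"
      using D(2) by (simp add: D'_def energy_val_cap_delays)
  qed (rule snd_lim)
  ultimately have "energy_rel A ss {lo..hi} (fst l) (snd l)"
    using energy_rel_iff_feasible_delays[OF etp path] by blast
  then show "l \<in> {(w0, w1). energy_rel A ss {lo..hi} w0 w1}" by (simp add: case_prod_beta)
qed

lemma closed_slices:
  fixes R :: "'a::topological_space \<Rightarrow> 'b::topological_space \<Rightarrow> bool"
  assumes "closed {(x, y). R x y}"
  shows "closed {y. R x y}" "closed {x. R x y}"
proof -
  have "closed (Pair x -` {(x, y). R x y})"
    by (rule closed_vimage[OF assms]) (intro continuous_intros)
  then show "closed {y. R x y}" by (simp add: vimage_def)
  have "closed ((\<lambda>x. (x, y)) -` {(x, y). R x y})"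
    by (rule closed_vimage[OF assms]) (intro continuous_intros)
  then show "closed {x. R x y}" by (simp add: vimage_def)
qed

lemma Bex_Inter_decseq_compact:
  fixes K :: "nat \<Rightarrow> 'a::heine_borel set"
  assumes "closed {y. P y}" and "\<And>j. compact (K j)" and "\<And>j. K (Suc j) \<subseteq> K j"
  shows "(\<exists>y \<in> (\<Inter>j. K j). P y) \<longleftrightarrow> (\<forall>j. \<exists>y \<in> K j. P y)"
proof
  assume "\<forall>j. \<exists>y \<in> K j. P y"
  moreover have "K n \<subseteq> K m" if "m \<le> n" for m n
    using that by (rule lift_Suc_antimono_le[of K, rotated]) (rule assms(3))
  ultimately have "\<Inter>(range (\<lambda>j. K j \<inter> {y. P y})) \<noteq> {}"
    using assms(1,2) by (intro compact_nest compact_Int_closed) auto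
  then show "\<exists>y \<in> (\<Inter>j. K j). P y" by blast
qed blast

theorem mainTheorem1:
  fixes A :: "('s, 'c) eta" and ss :: "'s list" and a b :: rat
    and I :: "nat \<Rightarrow> real set"
  assumes "is_ETP A ss"
    and "\<forall>j. I j \<in> closed_subintervals {real_of_rat a .. real_of_rat b}"
    and "\<forall>j. I (Suc j) \<subseteq> I j"
  shows "energy_preimg A ss {real_of_rat a .. real_of_rat b} (\<Inter>j. I j)
           = (\<Inter>j. energy_preimg A ss {real_of_rat a .. real_of_rat b} (I j))
       \<and> energy_img A ss {real_of_rat a .. real_of_rat b} (\<Inter>j. I j)
           = (\<Inter>j. energy_img A ss {real_of_rat a .. real_of_rat b} (I j))"
proof
  let ?E = "{real_of_rat a .. real_of_rat b}"
  let ?R = "energy_rel A ss ?E"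
  have closed: "closed {(w0, w1). ?R w0 w1}" using assms(1) by (rule closed_energy_rel)
  have compact: "compact (I j)" for j
  proof -
    obtain l u where "I j = {l..u}" using assms(2) unfolding closed_subintervals_def by blast
    then show ?thesis by simp
  qed
  have decreasing: "I (Suc j) \<subseteq> I j" for j using assms(3) by blast
  have "w0 \<in> energy_preimg A ss ?E (\<Inter>j. I j) \<longleftrightarrow> w0 \<in> (\<Inter>j. energy_preimg A ss ?E (I j))" for w0
    using Bex_Inter_decseq_compact[where K = I, OF closed_slices(1)[OF closed, of w0] compact decreasing]
    unfolding energy_preimg_def by blast
  then show "energy_preimg A ss ?E (\<Inter>j. I j) = (\<Inter>j. energy_preimg A ss ?E (I j))" by blast
  have "w1 \<in> energy_img A ss ?E (\<Inter>j. I j) \<longleftrightarrow> w1 \<in> (\<Inter>j. energy_img A ss ?E (I j))" for w1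
    using Bex_Inter_decseq_compact[where K = I, OF closed_slices(2)[OF closed, of w1] compact decreasing]
    unfolding energy_img_def by blast
  then show "energy_img A ss ?E (\<Inter>j. I j) = (\<Inter>j. energy_img A ss ?E (I j))" by blast
qed

end
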